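(* Consider the single-target search setting described in the context, with planning horizon $T\geq 1$, discount factor $\lambda\in[0,1]$, and probability of detection $P_d\in(0,1]$, under the ideal measurement set assumptions (i) $\Sigma=0$ (target-generated measurements are error-free) and (ii) $\lambda_{FA}=0$ (no false alarms). Then the suboptimal (open-loop) control approach and the optimal (Bellman-type, closed-loop) control approach generate identical first actions, i.e. $\hat{a}^\star_1=a^\star_1$, where $$a^\star_1=\operatorname{argmin}_{a_1}\Big[\min_{a_{2:T}}\ \mathbb{E}_{z_{1:T}}\Big[\sum_{t=1}^T\lambda^{t-1}r_t(z_{1:t},a_{1:t})\Big]\Big]$$ and $$\hat{a}^\star_1=\operatorname{argmin}_{a_1}\mathbb{E}_{z_1}\Big[r_1(z_1,a_1)+\lambda\min_{a_2}\mathbb{E}_{z_2\mid z_1}\Big[r_2(z_{1:2},a_{1:2})+\lambda\min_{a_3}\mathbb{E}_{z_3\mid z_{1:2}}\Big[r_3(z_{1:3},a_{1:3})+\cdots+\lambda\min_{a_T}\mathbb{E}_{z_T\mid z_{1:T-1}}\big[r_T(z_{1:T},a_{1:T})\big]\Big]\Big]\Big],$$ this holding irrespective of the length $T$ of the planning horizon. (In the optimal approach, each inner minimisation over $a_t$ is performed separately for each realisation of the earlier measurements $z_{1:t-1}$, whereas in the suboptimal approach $a_{2:T}$ are chosen jointly, independently of the measurements.)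
   Context: Target model: there is either zero or one stationary target. The hypotheses are $x_0$ ("no target present") and $x_1,\dots,x_n\in\mathbb{R}^2$ ("a target exists at $x_i$"), with prior probabilities $p(x_0)=1-r$ and $p(x_i)=r\,w_i$ for $i\ge 1$, where $r\in[0,1]$ is the probability of existence and $w_i\ge 0$, $\sum_{i=1}^n w_i=1$. Actions $a$ belong to a finite set $\mathbb{A}$; each action $a$ determines a sensor field of view $\mathrm{FOV}(a)\subseteq\mathbb{R}^2$ (possibly empty, e.g. "do not observe"). At each time $t=1,\dots,T$ an action $a_t$ is taken and a (finite set-valued) measurement $z_t$ is received; conditional on the hypothesis, measurements at different times are independent. General measurement model: if the hypothesis is $x_i$ with $i>0$ and $x_i\in\mathrm{FOV}(a_t)$, the target is detected with probability $P_d$, producing a measurement distributed as $\mathcal{N}(x_i,\Sigma)$; otherwise no target-generated measurement occurs; in addition a Poisson number (mean $\lambda_{FA}$ times the area of the FOV) of false alarms uniformly distributed in the FOV is generated. Under the ideal assumptions $\Sigma=0$, $\lambda_{FA}=0$ this means: $z_t=\{x_i\}$ with probability $P_d$ and $z_t=\emptyset$ with probability $1-P_d$ if $i>0$ and $x_i\in\mathrm{FOV}(a_t)$, and $z_t=\emptyset$ otherwise. Posterior hypothesis probabilities are $p(x_i\mid z_{1:t},a_{1:t})\propto p(x_i)\prod_{j=1}^t p(z_j\mid x_i,a_j)$ for $i=0,\dots,n$, and posterior location weights given existence are $w^i_{1:t}\propto p(x_i)\prod_{j=1}^t p(z_j\mid x_i,a_j)$ for $i\ge1$, normalised so $\sum_{i\ge1}w^i_{1:t}=1$.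 GOSPA cost (parameters $p=2$, $\alpha=2$, cut-off $c>0$) between at-most-one-element sets: $d(\emptyset,\emptyset)^2=0$; $d(\{x\},\emptyset)^2=d(\emptyset,\{y\})^2=c^2/2$; $d(\{x\},\{y\})^2=\min(\|x-y\|^2,c^2)$. The per-step cost is $r_t(z_{1:t},a_{1:t})=\mathrm{MMS\text{-}GOSPA}(z_{1:t},a_{1:t})=\min_{\hat X\in\{\emptyset,\{\hat X_e\}\}}\sum_{i=0}^n d(X_i,\hat X)^2\,p(x_i\mid z_{1:t},a_{1:t})$, where $X_0=\emptyset$, $X_i=\{x_i\}$ for $i\ge1$, and $\hat X_e=\sum_{i=1}^n w^i_{1:t}x_i$ is the posterior mean location. Expectations $\mathbb{E}_{z_{1:T}}$ are with respect to the joint (prior-predictive) distribution of measurements given the actions, and $\mathbb{E}_{z_t\mid z_{1:t-1}}$ with respect to the predictive distribution of $z_t$ given the earlier measurements and actions. Ties in the argmin are broken by the same rule in both approaches. *)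

theory Defs
  imports "HOL-Analysis.Analysis"
begin

type_synonym pt = "real ^ 2"
type_synonym meas = "pt set"

text \<open>Model parameters: number n of location hypotheses, locations x_1..x_n,
  probability of existence r, location weights w_i, detection probability P_d,
  field of view of each action, GOSPA cut-off c.\<close>
record 'a search_model =
  nH  :: nat
  loc :: "nat \<Rightarrow> pt"
  pex :: real
  wt  :: "nat \<Rightarrow> real"
  pd  :: real
  fov :: "'a \<Rightarrow> pt set"
  cut :: real

text \<open>Squared GOSPA distance (p = 2, alpha = 2) between sets with at most one element.\<close>
definition gospa2 :: "real \<Rightarrow> pt set \<Rightarrow> pt set \<Rightarrow> real" where
  "gospa2 c X Y =
     (if X = {} \<and> Y = {} then 0
      else if X = {} \<or> Y = {} then c^2 / 2
      else min ((dist (the_elem X) (the_elem Y))^2) (c^2))"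

definition hyp_set :: "'a search_model \<Rightarrow> nat \<Rightarrow> pt set" where
  "hyp_set M i = (if i = 0 then {} else {loc M i})"

definition prior :: "'a search_model \<Rightarrow> nat \<Rightarrow> real" where
  "prior M i = (if i = 0 then 1 - pex M else pex M * wt M i)"

text \<open>Measurement likelihood p(z | x_i, a) under the ideal assumptions
  (Sigma = 0: error-free detections; lambda_FA = 0: no false alarms).\<close>
definition lik :: "'a search_model \<Rightarrow> nat \<Rightarrow> 'a \<Rightarrow> meas \<Rightarrow> real" where
  "lik M i a z =
     (if 0 < i \<and> loc M i \<in> fov M a
      then (if z = {loc M i} then pd M else if z = {} then 1 - pd M else 0)
      else (if z = {} then 1 else 0))"

text \<open>Unnormalised posterior p(x_i) prod_j p(z_j | x_i, a_j); zs = z_{1:t}, as = a_{1:t}.\<close>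
definition jw :: "'a search_model \<Rightarrow> nat \<Rightarrow> meas list \<Rightarrow> 'a list \<Rightarrow> real" where
  "jw M i zs as = prior M i * (\<Prod>j<length zs. lik M i (as ! j) (zs ! j))"

definition joint :: "'a search_model \<Rightarrow> meas list \<Rightarrow> 'a list \<Rightarrow> real" where
  "joint M zs as = (\<Sum>i\<le>nH M. jw M i zs as)"

definition post :: "'a search_model \<Rightarrow> nat \<Rightarrow> meas list \<Rightarrow> 'a list \<Rightarrow> real" where
  "post M i zs as = jw M i zs as / joint M zs as"

definition locw :: "'a search_model \<Rightarrow> nat \<Rightarrow> meas list \<Rightarrow> 'a list \<Rightarrow> real" where
  "locw M i zs as = jw M i zs as / (\<Sum>k\<in>{1..nH M}. jw M k zs as)"

definition post_mean :: "'a search_model \<Rightarrow> meas list \<Rightarrow> 'a list \<Rightarrow> pt" where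
  "post_mean M zs as = (\<Sum>i\<in>{1..nH M}. locw M i zs as *\<^sub>R loc M i)"

definition mms_gospa :: "'a search_model \<Rightarrow> meas list \<Rightarrow> 'a list \<Rightarrow> real" where
  "mms_gospa M zs as =
     min (\<Sum>i\<le>nH M. gospa2 (cut M) (hyp_set M i) {} * post M i zs as)
         (\<Sum>i\<le>nH M. gospa2 (cut M) (hyp_set M i) {post_mean M zs as} * post M i zs as)"

text \<open>Finite support of the measurement distribution under the ideal assumptions.\<close>
definition meas_support :: "'a search_model \<Rightarrow> meas set" where
  "meas_support M = insert {} ((\<lambda>i. {loc M i}) ` {1..nH M})"

definition pred :: "'a search_model \<Rightarrow> meas list \<Rightarrow> 'a list \<Rightarrow> meas \<Rightarrow> 'a \<Rightarrow> real" where
  "pred M zs as z a = joint M (zs @ [z]) (as @ [a]) / joint M zs as"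

definition ol_cost :: "'a search_model \<Rightarrow> real \<Rightarrow> nat \<Rightarrow> 'a list \<Rightarrow> real" where
  "ol_cost M lam T as =
     (\<Sum>zs\<in>{zs. length zs = T \<and> set zs \<subseteq> meas_support M}.
        joint M zs as * (\<Sum>t\<in>{1..T}. lam ^ (t - 1) * mms_gospa M (take t zs) (take t as)))"

definition ol_obj :: "'a search_model \<Rightarrow> real \<Rightarrow> nat \<Rightarrow> 'a set \<Rightarrow> 'a \<Rightarrow> real" where
  "ol_obj M lam T A a1 =
     Min ((\<lambda>rest. ol_cost M lam T (a1 # rest)) ` {rest. length rest = T - 1 \<and> set rest \<subseteq> A})"

text \<open>Closed-loop (optimal, Bellman-type) approach: cl_Q M lam A m zs as a is
  E_{z | zs}[ r(zs@[z], as@[a]) + lam * min_{a'} (...) ] with m further decision stages.\<close>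
primrec cl_Q :: "'a search_model \<Rightarrow> real \<Rightarrow> 'a set \<Rightarrow> nat \<Rightarrow> meas list \<Rightarrow> 'a list \<Rightarrow> 'a \<Rightarrow> real" where
  "cl_Q M lam A 0 zs as a =
     (\<Sum>z\<in>meas_support M. pred M zs as z a * mms_gospa M (zs @ [z]) (as @ [a]))"
| "cl_Q M lam A (Suc m) zs as a =
     (\<Sum>z\<in>meas_support M. pred M zs as z a *
        (mms_gospa M (zs @ [z]) (as @ [a])
         + lam * Min ((cl_Q M lam A m (zs @ [z]) (as @ [a])) ` A)))"

definition cl_obj :: "'a search_model \<Rightarrow> real \<Rightarrow> nat \<Rightarrow> 'a set \<Rightarrow> 'a \<Rightarrow> real" where
  "cl_obj M lam T A a1 = cl_Q M lam A (T - 1) [] [] a1"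

text \<open>Argmin over the finite action set; a tie-breaking rule tb picks one element.\<close>
definition argmin_set :: "'a set \<Rightarrow> ('a \<Rightarrow> real) \<Rightarrow> 'a set" where
  "argmin_set A f = {a \<in> A. \<forall>b\<in>A. f a \<le> f b}"

end

theory Submission
  imports Defs
begin

text \<open>Under the ideal assumptions a detection reveals the target location exactly: the
  posterior is then concentrated on hypotheses sharing that location, its mean is that
  location, and the MMS-GOSPA cost is zero from then on. Hence the only measurement history
  that carries future cost is the all-empty one, and along it a closed-loop policy is just a
  fixed action sequence. Induction over the horizon shows that the closed-loop value, weighted
  by the joint probability of the history, equals the minimum over open-loop continuations of
  the open-loop cost-to-go. The two objectives therefore agree for every first action, and so
  do their argmin sets.\<close>

definition lists_of_len :: "'b set \<Rightarrow> nat \<Rightarrow> 'b list set" where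
  "lists_of_len S n = {w. length w = n \<and> set w \<subseteq> S}"

lemma finite_lists_of_len: "finite S \<Longrightarrow> finite (lists_of_len S n)"
  unfolding lists_of_len_def using finite_lists_length_eq[of S n] by (simp add: conj_commute)

lemma lists_of_len_nonempty: "S \<noteq> {} \<Longrightarrow> lists_of_len S n \<noteq> {}"
  unfolding lists_of_len_def by (auto intro!: exI[of _ "replicate n (SOME x. x \<in> S)"] some_in_eq[THEN iffD2])

lemma lists_of_len_0 [simp]: "lists_of_len S 0 = {[]}"
  unfolding lists_of_len_def by auto

lemma lists_of_len_Suc: "lists_of_len S (Suc n) = (\<lambda>(z, w). z # w) ` (S \<times> lists_of_len S n)"
  unfolding lists_of_len_def by (auto simp: length_Suc_conv)

lemma sum_lists_of_len_Suc:
  assumes "finite S"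
  shows "(\<Sum>w\<in>lists_of_len S (Suc n). f w) = (\<Sum>z\<in>S. \<Sum>w\<in>lists_of_len S n. f (z # w))"
proof -
  have "inj_on (\<lambda>(z, w). z # w) (S \<times> lists_of_len S n)" by (auto simp: inj_on_def)
  then have "(\<Sum>w\<in>lists_of_len S (Suc n). f w) = (\<Sum>p\<in>S \<times> lists_of_len S n. f (fst p # snd p))"
    unfolding lists_of_len_Suc by (subst sum.reindex) (auto simp: case_prod_beta)
  also have "\<dots> = (\<Sum>z\<in>S. \<Sum>w\<in>lists_of_len S n. f (z # w))"
    by (simp add: sum.cartesian_product split_def)
  finally show ?thesis .
qed

lemma Min_Min_lists_of_len_Suc:
  fixes F :: "'b list \<Rightarrow> 'c::linorder"
  assumes "finite A" "A \<noteq> {}"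
  shows "Min ((\<lambda>a. Min ((\<lambda>r. F (a # r)) ` lists_of_len A m)) ` A) = Min (F ` lists_of_len A (Suc m))"
proof -
  have fin: "finite (lists_of_len A n)" "lists_of_len A n \<noteq> {}" for n
    using assms finite_lists_of_len lists_of_len_nonempty by blast+
  show ?thesis
  proof (rule order.antisym)
    show "Min ((\<lambda>a. Min ((\<lambda>r. F (a # r)) ` lists_of_len A m)) ` A) \<le> Min (F ` lists_of_len A (Suc m))"
    proof (rule Min.boundedI)
      show "finite (F ` lists_of_len A (Suc m))" "F ` lists_of_len A (Suc m) \<noteq> {}"
        using fin by auto
      fix y assume "y \<in> F ` lists_of_len A (Suc m)"
      then obtain a r where ar: "a \<in> A" "r \<in> lists_of_len A m" "y = F (a # r)"
        unfolding lists_of_len_Suc by auto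
      have "Min ((\<lambda>a. Min ((\<lambda>r. F (a # r)) ` lists_of_len A m)) ` A)
          \<le> Min ((\<lambda>r. F (a # r)) ` lists_of_len A m)"
        using assms ar by (intro Min_le) auto
      also have "\<dots> \<le> F (a # r)" using fin ar by (intro Min_le) auto
      finally show "Min ((\<lambda>a. Min ((\<lambda>r. F (a # r)) ` lists_of_len A m)) ` A) \<le> y"
        using ar by simp
    qed
    show "Min (F ` lists_of_len A (Suc m)) \<le> Min ((\<lambda>a. Min ((\<lambda>r. F (a # r)) ` lists_of_len A m)) ` A)"
      using assms fin by (auto simp: lists_of_len_Suc intro!: Min_le)
  qed
qed

lemma finite_meas_support: "finite (meas_support M)"
  unfolding meas_support_def by simp

lemma empty_in_meas_support: "{} \<in> meas_support M"
  unfolding meas_support_def by simp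

lemma joint_Nil:
  assumes "(\<Sum>i\<in>{1..nH M}. wt M i) = 1"
  shows "joint M [] [] = 1"
proof -
  have "{..nH M} = insert 0 {1..nH M}" by auto
  then have "joint M [] [] = prior M 0 + (\<Sum>i\<in>{1..nH M}. pex M * wt M i)"
    unfolding joint_def jw_def by (simp add: prior_def)
  then show ?thesis using assms by (simp add: prior_def flip: sum_distrib_left)
qed

lemma jw_snoc:
  assumes "length as = length zs"
  shows "jw M i (zs @ [z]) (as @ [a]) = jw M i zs as * lik M i a z"
proof -
  have "(\<Prod>j<length zs. lik M i ((as @ [a]) ! j) ((zs @ [z]) ! j)) = (\<Prod>j<length zs. lik M i (as ! j) (zs ! j))"
    using assms by (intro prod.cong refl) (simp add: nth_append)
  then show ?thesis
    using assms unfolding jw_def by (simp add: nth_append mult.assoc)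
qed

lemma sum_lik: "i \<le> nH M \<Longrightarrow> (\<Sum>z\<in>meas_support M. lik M i a z) = 1"
proof -
  assume i: "i \<le> nH M"
  define Z where "Z = (if 0 < i \<and> loc M i \<in> fov M a then {{}, {loc M i}} else {{}})"
  have "Z \<subseteq> meas_support M" using i unfolding Z_def meas_support_def by auto
  then have "(\<Sum>z\<in>meas_support M. lik M i a z) = (\<Sum>z\<in>Z. lik M i a z)"
    by (intro sum.mono_neutral_right finite_meas_support) (auto simp: Z_def lik_def)
  also have "\<dots> = 1" by (auto simp: Z_def lik_def)
  finally show ?thesis .
qed

lemma sum_jw_extensions:
  assumes "length as = length zs" "length bs = n" "i \<le> nH M"
  shows "(\<Sum>w\<in>lists_of_len (meas_support M) n. jw M i (zs @ w) (as @ bs)) = jw M i zs as"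
  using assms(1,2)
proof (induction n arbitrary: zs as bs)
  case 0
  then show ?case by simp
next
  case (Suc n)
  then obtain b bs' where bs: "bs = b # bs'" "length bs' = n" by (cases bs) auto
  have "(\<Sum>w\<in>lists_of_len (meas_support M) (Suc n). jw M i (zs @ w) (as @ bs))
      = (\<Sum>z\<in>meas_support M. \<Sum>w\<in>lists_of_len (meas_support M) n. jw M i ((zs @ [z]) @ w) ((as @ [b]) @ bs'))"
    by (simp add: sum_lists_of_len_Suc[OF finite_meas_support] bs)
  also have "\<dots> = (\<Sum>z\<in>meas_support M. jw M i (zs @ [z]) (as @ [b]))"
    using Suc.prems bs by (intro sum.cong refl Suc.IH) auto
  also have "\<dots> = (\<Sum>z\<in>meas_support M. jw M i zs as * lik M i b z)"
    using Suc.prems by (simp add: jw_snoc)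
  also have "\<dots> = jw M i zs as"
    using sum_lik[OF assms(3)] by (simp flip: sum_distrib_left)
  finally show ?case .
qed

lemma sum_joint_extensions:
  assumes "length as = length zs" "length bs = n"
  shows "(\<Sum>w\<in>lists_of_len (meas_support M) n. joint M (zs @ w) (as @ bs)) = joint M zs as"
  unfolding joint_def using assms by (subst sum.swap) (simp add: sum_jw_extensions)

text \<open>It is
  weighted by the joint probability of the history instead of conditioned on it, which avoids
  dividing by a possibly vanishing probability.\<close>

primrec ol_cost_to_go :: "'a search_model \<Rightarrow> real \<Rightarrow> meas list \<Rightarrow> 'a list \<Rightarrow> 'a list \<Rightarrow> real" where
  "ol_cost_to_go M lam zs as [] = 0"
| "ol_cost_to_go M lam zs as (b # bs) =
     (\<Sum>z\<in>meas_support M. joint M (zs @ [z]) (as @ [b]) * mms_gospa M (zs @ [z]) (as @ [b])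
        + lam * ol_cost_to_go M lam (zs @ [z]) (as @ [b]) bs)"

lemma ol_cost_to_go_eq_expectation:
  assumes "length as = length zs"
  shows "ol_cost_to_go M lam zs as bs =
    (\<Sum>w\<in>lists_of_len (meas_support M) (length bs). joint M (zs @ w) (as @ bs) *
       (\<Sum>t\<in>{1..length bs}. lam ^ (t - 1) * mms_gospa M (zs @ take t w) (as @ take t bs)))"
  using assms
proof (induction bs arbitrary: zs as)
  case Nil
  then show ?case by simp
next
  case (Cons b bs)
  define S where "S = meas_support M"
  define n where "n = length bs"
  define J where "J z w = joint M ((zs @ [z]) @ w) ((as @ [b]) @ bs)" for z w
  define m where "m z = mms_gospa M (zs @ [z]) (as @ [b])" for z
  define I where "I z w = (\<Sum>t\<in>{1..n}. lam ^ (t - 1) * mms_gospa M ((zs @ [z]) @ take t w) ((as @ [b]) @ take t bs))"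
    for z w
  have costs_Cons: "(\<Sum>t\<in>{1..Suc n}. lam ^ (t - 1) * mms_gospa M (zs @ take t (z # w)) (as @ take t (b # bs)))
      = m z + lam * I z w" for z w
  proof -
    have "(\<Sum>t\<in>{1..n}. lam ^ t * mms_gospa M (zs @ z # take t w) (as @ b # take t bs)) = lam * I z w"
      unfolding I_def sum_distrib_left
    proof (intro sum.cong refl)
      fix t assume "t \<in> {1..n}"
      then show "lam ^ t * mms_gospa M (zs @ z # take t w) (as @ b # take t bs)
        = lam * (lam ^ (t - 1) * mms_gospa M ((zs @ [z]) @ take t w) ((as @ [b]) @ take t bs))"
        by (cases t) auto
    qed
    then show ?thesis
      by (simp add: sum.atLeast_Suc_atMost sum.atLeast_Suc_atMost_Suc_shift m_def del: sum.cl_ivl_Suc)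
  qed
  have marginal: "(\<Sum>w\<in>lists_of_len S n. J z w) = joint M (zs @ [z]) (as @ [b])" for z
    unfolding J_def S_def n_def using Cons.prems by (intro sum_joint_extensions) auto
  have cost_to_go_next: "(\<Sum>w\<in>lists_of_len S n. J z w * I z w) = ol_cost_to_go M lam (zs @ [z]) (as @ [b]) bs"
    for z
    unfolding J_def I_def S_def n_def using Cons.prems by (intro Cons.IH[symmetric]) simp
  have "(\<Sum>w\<in>lists_of_len S (Suc n). joint M (zs @ w) (as @ b # bs) *
        (\<Sum>t\<in>{1..Suc n}. lam ^ (t - 1) * mms_gospa M (zs @ take t w) (as @ take t (b # bs))))
      = (\<Sum>z\<in>S. \<Sum>w\<in>lists_of_len S n. J z w * (m z + lam * I z w))"
    by (simp only: sum_lists_of_len_Suc[OF finite_meas_support[of M, folded S_def]] costs_Cons)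
      (simp add: J_def)
  also have "\<dots> = (\<Sum>z\<in>S. (\<Sum>w\<in>lists_of_len S n. J z w) * m z + lam * (\<Sum>w\<in>lists_of_len S n. J z w * I z w))"
    by (simp add: distrib_left sum.distrib sum_distrib_left sum_distrib_right mult_ac)
  also have "\<dots> = ol_cost_to_go M lam zs as (b # bs)"
    unfolding marginal cost_to_go_next by (simp add: m_def S_def)
  finally show ?case by (simp add: S_def n_def)
qed

lemma ol_cost_eq_ol_cost_to_go: "length as = T \<Longrightarrow> ol_cost M lam T as = ol_cost_to_go M lam [] [] as"
  by (simp add: ol_cost_to_go_eq_expectation ol_cost_def lists_of_len_def)

locale nonneg_search_model =
  fixes M :: "'a search_model"
  assumes pd_nonneg: "0 \<le> pd M" and pd_le_1: "pd M \<le> 1"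
    and pex_nonneg: "0 \<le> pex M" and pex_le_1: "pex M \<le> 1"
    and wt_nonneg: "\<forall>i\<in>{1..nH M}. 0 \<le> wt M i"
begin

lemma jw_nonneg: "i \<le> nH M \<Longrightarrow> 0 \<le> jw M i zs as"
proof -
  assume "i \<le> nH M"
  then have "0 \<le> prior M i"
    using pex_nonneg pex_le_1 wt_nonneg unfolding prior_def by auto
  moreover have "0 \<le> lik M i a z" for a z
    using pd_nonneg pd_le_1 unfolding lik_def by auto
  ultimately show ?thesis
    unfolding jw_def by (intro mult_nonneg_nonneg prod_nonneg) auto
qed

lemma joint_nonneg: "0 \<le> joint M zs as"
  unfolding joint_def using jw_nonneg by (intro sum_nonneg) auto

lemma joint_mult_pred:
  assumes "length as = length zs"
  shows "joint M zs as * pred M zs as z a = joint M (zs @ [z]) (as @ [a])"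
proof (cases "joint M zs as = 0")
  case True
  then have "\<forall>i\<in>{..nH M}. jw M i zs as = 0"
    unfolding joint_def using sum_nonneg_eq_0_iff[of "{..nH M}" "\<lambda>i. jw M i zs as"] jw_nonneg by auto
  then have "joint M (zs @ [z]) (as @ [a]) = 0"
    unfolding joint_def using assms by (simp add: jw_snoc)
  then show ?thesis using True by simp
next
  case False
  then show ?thesis unfolding pred_def by simp
qed

lemma post_mean_eq_if_concentrated:
  assumes i: "i \<in> {1..nH M}" "jw M i zs as \<noteq> 0"
    and concentrated: "\<And>k. k \<in> {1..nH M} \<Longrightarrow> jw M k zs as \<noteq> 0 \<Longrightarrow> loc M k = p"
  shows "post_mean M zs as = p"
proof -
  have "jw M i zs as \<le> (\<Sum>k\<in>{1..nH M}. jw M k zs as)"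
    using i jw_nonneg by (intro member_le_sum) auto
  moreover have "0 \<le> jw M i zs as" using i jw_nonneg by auto
  ultimately have "(\<Sum>k\<in>{1..nH M}. jw M k zs as) \<noteq> 0" using i(2) by linarith
  then have weights_sum_1: "(\<Sum>k\<in>{1..nH M}. locw M k zs as) = 1"
    unfolding locw_def by (simp flip: sum_divide_distrib)
  have "locw M k zs as *\<^sub>R loc M k = locw M k zs as *\<^sub>R p" if "k \<in> {1..nH M}" for k
    using concentrated[OF that] by (cases "jw M k zs as = 0") (auto simp: locw_def)
  then have "post_mean M zs as = (\<Sum>k\<in>{1..nH M}. locw M k zs as) *\<^sub>R p"
    unfolding post_mean_def scaleR_sum_left by (intro sum.cong refl)
  then show ?thesis using weights_sum_1 by simp
qed

lemma mms_gospa_after_detection: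
  assumes j: "j < length zs" and detected: "zs ! j \<noteq> {}"
  shows "mms_gospa M zs as = 0"
proof -
  have consistent: "0 < k \<and> zs ! j = {loc M k}" if "jw M k zs as \<noteq> 0" for k
  proof -
    have "lik M k (as ! j) (zs ! j) \<noteq> 0"
      using that j unfolding jw_def by auto
    then show ?thesis using detected unfolding lik_def by (auto split: if_splits)
  qed
  have estimate_present: "gospa2 (cut M) (hyp_set M i) {post_mean M zs as} * post M i zs as = 0"
    if "i \<le> nH M" for i
  proof (cases "jw M i zs as = 0")
    case True
    then show ?thesis by (simp add: post_def)
  next
    case False
    then have "i \<in> {1..nH M}" using consistent[OF False] that by auto
    moreover have "loc M k = loc M i" if "jw M k zs as \<noteq> 0" for k
      using consistent[OF that] consistent[OF False] by auto
    ultimately have "post_mean M zs as = loc M i"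
      using False by (intro post_mean_eq_if_concentrated)
    with \<open>i \<in> {1..nH M}\<close> show ?thesis
      by (simp add: hyp_set_def gospa2_def)
  qed
  have "0 \<le> (\<Sum>i\<le>nH M. gospa2 (cut M) (hyp_set M i) {} * post M i zs as)"
    using jw_nonneg joint_nonneg by (intro sum_nonneg) (auto simp: gospa2_def post_def)
  then show ?thesis
    unfolding mms_gospa_def by (simp add: estimate_present)
qed

lemma ol_cost_to_go_after_detection:
  assumes "x \<in> set zs" "x \<noteq> {}"
  shows "ol_cost_to_go M lam zs as bs = 0"
  using assms(1)
proof (induction bs arbitrary: zs as)
  case (Cons b bs)
  obtain j where "j < length zs" "zs ! j = x" using Cons.prems by (auto simp: in_set_conv_nth)
  then have "mms_gospa M (zs @ [z]) (as @ [b]) = 0" for z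
    using assms(2) by (intro mms_gospa_after_detection[of j]) (auto simp: nth_append)
  then show ?case using Cons by simp
qed simp

lemma sum_only_no_detection:
  assumes "\<And>z. z \<noteq> {} \<Longrightarrow> f z = 0"
  shows "(\<Sum>z\<in>meas_support M. f z) = f {}"
  using assms by (simp add: sum.remove[OF finite_meas_support empty_in_meas_support] sum.neutral)

lemma ol_cost_to_go_Cons:
  "ol_cost_to_go M lam zs as (b # bs) =
     (\<Sum>z\<in>meas_support M. joint M (zs @ [z]) (as @ [b]) * mms_gospa M (zs @ [z]) (as @ [b]))
     + lam * ol_cost_to_go M lam (zs @ [{}]) (as @ [b]) bs"
proof -
  have "(\<Sum>z\<in>meas_support M. ol_cost_to_go M lam (zs @ [z]) (as @ [b]) bs)
      = ol_cost_to_go M lam (zs @ [{}]) (as @ [b]) bs"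
    by (rule sum_only_no_detection) (auto intro: ol_cost_to_go_after_detection)
  then show ?thesis by (simp add: sum.distrib flip: sum_distrib_left)
qed

lemma joint_mult_cl_Q:
  assumes A: "finite A" "A \<noteq> {}" and lam: "0 \<le> lam" and len: "length as = length zs"
  shows "joint M zs as * cl_Q M lam A m zs as a
    = Min ((\<lambda>r. ol_cost_to_go M lam zs as (a # r)) ` lists_of_len A m)"
  using len
proof (induction m arbitrary: zs as a)
  case 0
  then show ?case by (simp add: sum_distrib_left joint_mult_pred flip: mult.assoc)
next
  case (Suc m)
  have fin: "finite (lists_of_len A (Suc m))" "lists_of_len A (Suc m) \<noteq> {}"
    using A finite_lists_of_len lists_of_len_nonempty by blast+
  define C where "C = (\<Sum>z\<in>meas_support M. joint M (zs @ [z]) (as @ [a]) * mms_gospa M (zs @ [z]) (as @ [a]))"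
  define G where "G z = Min (ol_cost_to_go M lam (zs @ [z]) (as @ [a]) ` lists_of_len A (Suc m))" for z
  have value_next: "joint M (zs @ [z]) (as @ [a]) * Min (cl_Q M lam A m (zs @ [z]) (as @ [a]) ` A) = G z" for z
  proof -
    have "joint M (zs @ [z]) (as @ [a]) * Min (cl_Q M lam A m (zs @ [z]) (as @ [a]) ` A)
        = Min ((\<lambda>a'. joint M (zs @ [z]) (as @ [a]) * cl_Q M lam A m (zs @ [z]) (as @ [a]) a') ` A)"
      using A joint_nonneg by (subst mono_Min_commute) (auto intro: monoI mult_left_mono simp: image_image)
    also have "\<dots> = Min ((\<lambda>a'. Min ((\<lambda>r. ol_cost_to_go M lam (zs @ [z]) (as @ [a]) (a' # r))
        ` lists_of_len A m)) ` A)"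
      using Suc.prems by (intro arg_cong[where f = Min] image_cong refl Suc.IH) simp
    also have "\<dots> = G z"
      unfolding G_def by (rule Min_Min_lists_of_len_Suc[OF A])
    finally show ?thesis .
  qed
  have "G z = 0" if "z \<noteq> {}" for z
  proof -
    have "ol_cost_to_go M lam (zs @ [z]) (as @ [a]) ` lists_of_len A (Suc m) = {0}"
      using fin that ol_cost_to_go_after_detection[of z "zs @ [z]"] by auto
    then show ?thesis unfolding G_def by simp
  qed
  then have "(\<Sum>z\<in>meas_support M. G z) = G {}"
    by (rule sum_only_no_detection)
  moreover have "joint M zs as * cl_Q M lam A (Suc m) zs as a = C + lam * (\<Sum>z\<in>meas_support M. G z)"
    using Suc.prems
    by (simp add: C_def sum.distrib distrib_left sum_distrib_left joint_mult_pred
        flip: mult.assoc value_next) (simp add: mult_ac)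
  ultimately have "joint M zs as * cl_Q M lam A (Suc m) zs as a = C + lam * G {}"
    by simp
  also have "\<dots> = Min ((\<lambda>r. C + lam * ol_cost_to_go M lam (zs @ [{}]) (as @ [a]) r) ` lists_of_len A (Suc m))"
    unfolding G_def using fin lam
    by (subst mono_Min_commute) (auto intro!: monoI mult_left_mono simp: image_image)
  also have "\<dots> = Min ((\<lambda>r. ol_cost_to_go M lam zs as (a # r)) ` lists_of_len A (Suc m))"
    by (simp only: ol_cost_to_go_Cons C_def)
  finally show ?case .
qed

end

lemma cl_obj_eq_ol_obj:
  assumes "nonneg_search_model M" and "finite A" "A \<noteq> {}" "1 \<le> T" "0 \<le> lam"
    and "(\<Sum>i\<in>{1..nH M}. wt M i) = 1"
  shows "cl_obj M lam T A a = ol_obj M lam T A a"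
proof -
  have "cl_obj M lam T A a = joint M [] [] * cl_Q M lam A (T - 1) [] [] a"
    using assms(6) by (simp add: cl_obj_def joint_Nil)
  also have "\<dots> = Min ((\<lambda>r. ol_cost_to_go M lam [] [] (a # r)) ` lists_of_len A (T - 1))"
    using assms by (intro nonneg_search_model.joint_mult_cl_Q) auto
  also have "\<dots> = ol_obj M lam T A a"
    unfolding ol_obj_def lists_of_len_def using assms(4)
    by (intro arg_cong[where f = Min] image_cong refl) (auto simp: ol_cost_eq_ol_cost_to_go)
  finally show ?thesis .
qed

theorem mainTheorem1:
  fixes M :: "'a search_model" and A :: "'a set" and T :: nat and lam :: real
    and tb :: "'a set \<Rightarrow> 'a"
  assumes "finite A" and "A \<noteq> {}"
    and "1 \<le> T"
    and "0 \<le> lam" and "lam \<le> 1"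
    and "0 < pd M" and "pd M \<le> 1"
    and "0 \<le> pex M" and "pex M \<le> 1"
    and "\<forall>i\<in>{1..nH M}. 0 \<le> wt M i" and "(\<Sum>i\<in>{1..nH M}. wt M i) = 1"
    and "0 < cut M"
  shows "tb (argmin_set A (cl_obj M lam T A)) = tb (argmin_set A (ol_obj M lam T A))"
proof -
  have "nonneg_search_model M"
    using assms by unfold_locales auto
  then have "cl_obj M lam T A = ol_obj M lam T A"
    using assms by (intro ext cl_obj_eq_ol_obj) auto
  then show ?thesis by simp
qed

end
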